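(* Consider a rule of the PJR-Exact family run on $(\mathcal{A},k)$, and fix $j$ with $1\le j\le k-1$ such that iterations $1,\dots,j$ are all normal. Then no candidate in $C\setminus W_j$ is in a starving state after $j$ iterations; i.e., for every $c\in C\setminus W_j$ and every $i\in N_c$ with $\ell_j(i,c)>|A_i\cap W_j|$, we have $f_i^j\ge\frac{\ell_j(i,c)-|A_i\cap W_j|}{\ell_j(i,c)}$.
   Context: Setting: voters $N=\{1,\dots,n\}$, candidates $C=\{c_1,\dots,c_m\}$, approval ballots $A_i\subseteq C$, $\mathcal{A}=(A_1,\dots,A_n)$, $k$ a positive integer with $k\le|C|$, $q=n/k$, $N_c=\{i: c\in A_i\}$. Convention: $\max\emptyset=0$. Dissatisfaction level: for $W\subseteq C$ with $|W|\le k$ and $c\in C\setminus W$, $\ell(c,W)$ is the largest nonnegative integer $\ell$ with $\ell=\lfloor \frac{k}{n}|\{i\in N: c\in A_i,\ |A_i\cap W|<\ell\}|\rfloor$. PJR-Exact family: iterative procedures selecting $w_1,\dots,w_k$, $W_0=\emptyset$, $W_j=W_{j-1}\cup\{w_j\}$, $w_j\notin W_{j-1}$, with vote fractions $f_i^0=1$, $0\le f_i^j\le f_i^{j-1}$, such that at each iteration $j$: (a) $f_i^j=f_i^{j-1}$ for $i\notin N_{w_j}$; (b) with $s=\sum_{i\in N_{w_j}}f_i^{j-1}$, if $s>q$ then $\sum_{i\in N_{w_j}}(f_i^{j-1}-f_i^j)=q$, and if $s\le q$ then $f_i^j=0$ for all $i\in N_{w_j}$; (c) if some $c\in C\setminus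 W_{j-1}$ has $\sum_{i\in N_c}f_i^{j-1}\ge q$ then $\sum_{i\in N_{w_j}}f_i^{j-1}\ge q$. Notation along a run: $\ell_j(c)=\ell(c,W_j)$ for $c\in C\setminus W_j$; for $c\in C\setminus W_j$ and $i\in N_c$, $\ell_j(i,c)=\max_{c'\in A_i\setminus(W_j\cup\{c\})}\ell_j(c')$; $g_i^j(c)=0$ if $\ell_j(i,c)\le|A_i\cap W_j|$ and $g_i^j(c)=\frac{\ell_j(i,c)-|A_i\cap W_j|-1}{\ell_j(i,c)}$ otherwise. Normal state: $c\in C\setminus W_j$ is in normal state after $j$ iterations if (1) for each $i\in N_c$ with $\ell_j(i,c)>|A_i\cap W_j|$ we have $f_i^j\ge\frac{\ell_j(i,c)-|A_i\cap W_j|}{\ell_j(i,c)}$, and (2) $\sum_{i\in N_c}(f_i^j-g_i^j(c))\ge q$. A candidate $c\in C\setminus W_j$ is in a starving state after $j$ iterations if condition (1) fails. Normal iteration: iteration $j$ ($1\le j\le k$) is normal if $w_j$ is in normal state after $j-1$ iterations and, for each $i\in N_{w_j}$ with $\ell_{j-1}(i,w_j)>|A_i\cap W_{j-1}|$, $f_i^j\ge\frac{\ell_{j-1}(i,w_j)-|A_i\cap W_j|}{\ell_{j-1}(i,w_j)}$. *)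

theory Defs
  imports Complex_Main
begin

text \<open>A run of a rule is given by the selected candidates
  w 1, ..., w k and the vote fractions f j i (f j i is f_i^j).\<close>

definition approvers :: "'v set \<Rightarrow> ('v \<Rightarrow> 'c set) \<Rightarrow> 'c \<Rightarrow> 'v set" where
  "approvers N A c = {i \<in> N. c \<in> A i}"

definition quota :: "'v set \<Rightarrow> nat \<Rightarrow> real" where
  "quota N k = real (card N) / real k"

definition dlevel :: "'v set \<Rightarrow> ('v \<Rightarrow> 'c set) \<Rightarrow> nat \<Rightarrow> 'c set \<Rightarrow> 'c \<Rightarrow> nat" where
  "dlevel N A k W c = (GREATEST l::nat. int l =
      \<lfloor>real k / real (card N) * real (card {i \<in> N. c \<in> A i \<and> card (A i \<inter> W) < l})\<rfloor>)"

definition Wset :: "(nat \<Rightarrow> 'c) \<Rightarrow> nat \<Rightarrow> 'c set" where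
  "Wset w j = w ` {1..j}"

definition dl :: "'v set \<Rightarrow> ('v \<Rightarrow> 'c set) \<Rightarrow> nat \<Rightarrow> (nat \<Rightarrow> 'c) \<Rightarrow> nat \<Rightarrow> 'c \<Rightarrow> nat" where
  "dl N A k w j c = dlevel N A k (Wset w j) c"

definition dlv :: "'v set \<Rightarrow> ('v \<Rightarrow> 'c set) \<Rightarrow> nat \<Rightarrow> (nat \<Rightarrow> 'c) \<Rightarrow> nat \<Rightarrow> 'v \<Rightarrow> 'c \<Rightarrow> nat" where
  "dlv N A k w j i c = Max (insert 0 (dl N A k w j ` (A i - (Wset w j \<union> {c}))))"

definition gfun :: "'v set \<Rightarrow> ('v \<Rightarrow> 'c set) \<Rightarrow> nat \<Rightarrow> (nat \<Rightarrow> 'c) \<Rightarrow> nat \<Rightarrow> 'v \<Rightarrow> 'c \<Rightarrow> real" where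
  "gfun N A k w j i c =
     (if dlv N A k w j i c \<le> card (A i \<inter> Wset w j) then 0
      else (real (dlv N A k w j i c) - real (card (A i \<inter> Wset w j)) - 1) / real (dlv N A k w j i c))"

definition cond1 :: "'v set \<Rightarrow> ('v \<Rightarrow> 'c set) \<Rightarrow> nat \<Rightarrow> (nat \<Rightarrow> 'c) \<Rightarrow> (nat \<Rightarrow> 'v \<Rightarrow> real) \<Rightarrow> nat \<Rightarrow> 'c \<Rightarrow> bool" where
  "cond1 N A k w f j c = (\<forall>i \<in> approvers N A c.
      dlv N A k w j i c > card (A i \<inter> Wset w j) \<longrightarrow>
      f j i \<ge> (real (dlv N A k w j i c) - real (card (A i \<inter> Wset w j))) / real (dlv N A k w j i c))"

definition normal_state :: "'v set \<Rightarrow> ('v \<Rightarrow> 'c set) \<Rightarrow> nat \<Rightarrow> (nat \<Rightarrow> 'c) \<Rightarrow> (nat \<Rightarrow> 'v \<Rightarrow> real) \<Rightarrow> nat \<Rightarrow> 'c \<Rightarrow> bool" where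
  "normal_state N A k w f j c = (cond1 N A k w f j c \<and>
      (\<Sum>i \<in> approvers N A c. f j i - gfun N A k w j i c) \<ge> quota N k)"

definition starving :: "'v set \<Rightarrow> ('v \<Rightarrow> 'c set) \<Rightarrow> nat \<Rightarrow> (nat \<Rightarrow> 'c) \<Rightarrow> (nat \<Rightarrow> 'v \<Rightarrow> real) \<Rightarrow> nat \<Rightarrow> 'c \<Rightarrow> bool" where
  "starving N A k w f j c = (\<not> cond1 N A k w f j c)"

definition normal_iteration :: "'v set \<Rightarrow> ('v \<Rightarrow> 'c set) \<Rightarrow> nat \<Rightarrow> (nat \<Rightarrow> 'c) \<Rightarrow> (nat \<Rightarrow> 'v \<Rightarrow> real) \<Rightarrow> nat \<Rightarrow> bool" where
  "normal_iteration N A k w f j = (normal_state N A k w f (j - 1) (w j) \<and>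
     (\<forall>i \<in> approvers N A (w j).
        dlv N A k w (j - 1) i (w j) > card (A i \<inter> Wset w (j - 1)) \<longrightarrow>
        f j i \<ge> (real (dlv N A k w (j - 1) i (w j)) - real (card (A i \<inter> Wset w j)))
                 / real (dlv N A k w (j - 1) i (w j))))"

definition pjr_exact_run :: "'v set \<Rightarrow> 'c set \<Rightarrow> ('v \<Rightarrow> 'c set) \<Rightarrow> nat \<Rightarrow> (nat \<Rightarrow> 'c) \<Rightarrow> (nat \<Rightarrow> 'v \<Rightarrow> real) \<Rightarrow> bool" where
  "pjr_exact_run N C A k w f =
    ((\<forall>i \<in> N. f 0 i = 1) \<and>
     (\<forall>j \<in> {1..k}.
        w j \<in> C \<and> w j \<notin> Wset w (j - 1) \<and>
        (\<forall>i \<in> N. 0 \<le> f j i \<and> f j i \<le> f (j - 1) i) \<and>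
        (\<forall>i \<in> N - approvers N A (w j). f j i = f (j - 1) i) \<and>
        (let s = (\<Sum>i \<in> approvers N A (w j). f (j - 1) i) in
           (s > quota N k \<longrightarrow> (\<Sum>i \<in> approvers N A (w j). f (j - 1) i - f j i) = quota N k) \<and>
           (s \<le> quota N k \<longrightarrow> (\<forall>i \<in> approvers N A (w j). f j i = 0))) \<and>
        ((\<exists>c \<in> C - Wset w (j - 1). (\<Sum>i \<in> approvers N A c. f (j - 1) i) \<ge> quota N k) \<longrightarrow>
           (\<Sum>i \<in> approvers N A (w j). f (j - 1) i) \<ge> quota N k)))"

end

theory Submission
  imports Defs
begin

text \<open>Dissatisfaction levels can only drop as the committee grows, and the threshold
  (L - a)/L = 1 - a/L is increasing in L. Hence, by induction on the iterations: a voter who does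
  not approve the newly elected candidate keeps both its vote fraction and the number a of its
  elected candidates, so its old bound still suffices; for a voter who approves it, the candidates
  still open to it besides c were open besides the elected one, so the second clause of a normal
  iteration gives the bound.\<close>

lemma exists_fixpoint_above:
  fixes h :: "nat \<Rightarrow> int"
  assumes "mono h" and "\<And>l. h l \<le> int b" and "int l \<le> h l"
  shows "\<exists>p\<ge>l. int p = h p"
  using assms(3)
proof (induction "b - l" arbitrary: l rule: less_induct)
  case less
  show ?case
  proof (cases "int l = h l")
    case False
    with less.prems have "int l < h l" by simp
    then have "l < b" using assms(2) by (meson of_nat_less_iff order_less_le_trans)
    have "int (Suc l) \<le> h (Suc l)"
      using \<open>int l < h l\<close> monoD[OF assms(1), of l "Suc l"] by simp
    moreover have "b - Suc l < b - l" using \<open>l < b\<close> by simp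
    ultimately obtain p where "Suc l \<le> p" "int p = h p" using less.hyps by blast
    then show ?thesis by (auto intro: Suc_leD)
  qed auto
qed

lemma le_Greatest_fixpoint:
  fixes h :: "nat \<Rightarrow> int"
  assumes "mono h" and "\<And>l. h l \<le> int b" and "int l \<le> h l"
  shows "l \<le> (GREATEST p. int p = h p)"
proof -
  obtain p where "l \<le> p" "int p = h p"
    using exists_fixpoint_above[OF assms] by blast
  moreover have "p \<le> (GREATEST p. int p = h p)"
  proof (rule Greatest_le_nat[where b = b])
    show "y \<le> b" if "int y = h y" for y using that assms(2) by (metis of_nat_le_iff)
  qed (fact \<open>int p = h p\<close>)
  ultimately show ?thesis by linarith
qed

definition level_count :: "'v set \<Rightarrow> ('v \<Rightarrow> 'c set) \<Rightarrow> nat \<Rightarrow> 'c set \<Rightarrow> 'c \<Rightarrow> nat \<Rightarrow> int" where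
  "level_count N A k W c l =
     \<lfloor>real k / real (card N) * real (card {i \<in> N. c \<in> A i \<and> card (A i \<inter> W) < l})\<rfloor>"

lemma dlevel_level_count: "dlevel N A k W c = (GREATEST l. int l = level_count N A k W c l)"
  unfolding dlevel_def level_count_def ..

lemma level_count_0: "level_count N A k W c 0 = 0"
  unfolding level_count_def by simp

lemma level_count_le_k:
  assumes "finite N"
  shows "level_count N A k W c l \<le> int k"
proof -
  let ?S = "{i \<in> N. c \<in> A i \<and> card (A i \<inter> W) < l}"
  have "card ?S \<le> card N" using assms by (intro card_mono) auto
  then have "real k / real (card N) * real (card ?S) \<le> real k"
    by (cases "card N = 0") (auto simp: field_simps intro!: mult_left_mono)
  then show ?thesis unfolding level_count_def by (metis floor_mono floor_of_nat)
qed

lemma level_count_mono: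
  assumes "finite N" and "W \<subseteq> W'" and "finite W'" and "l \<le> l'"
  shows "level_count N A k W' c l \<le> level_count N A k W c l'"
proof -
  have "card (A i \<inter> W) \<le> card (A i \<inter> W')" for i
    using assms(2,3) by (intro card_mono) auto
  then have "{i \<in> N. c \<in> A i \<and> card (A i \<inter> W') < l} \<subseteq> {i \<in> N. c \<in> A i \<and> card (A i \<inter> W) < l'}"
    using assms(4) by (auto intro: le_less_trans less_le_trans)
  then have "card {i \<in> N. c \<in> A i \<and> card (A i \<inter> W') < l}
      \<le> card {i \<in> N. c \<in> A i \<and> card (A i \<inter> W) < l'}"
    using assms(1) by (intro card_mono) auto
  then show ?thesis
    unfolding level_count_def by (intro floor_mono mult_left_mono) auto
qed

lemma dlevel_fixpoint:
  assumes "finite N"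
  shows "int (dlevel N A k W c) = level_count N A k W c (dlevel N A k W c)"
  unfolding dlevel_level_count
proof (rule GreatestI_nat[where k = 0 and b = k])
  show "int 0 = level_count N A k W c 0" by (simp add: level_count_0)
  show "y \<le> k" if "int y = level_count N A k W c y" for y
    using that level_count_le_k[OF assms] by (metis of_nat_le_iff)
qed

lemma dlevel_antimono:
  assumes "finite N" and "W \<subseteq> W'" and "finite W'"
  shows "dlevel N A k W' c \<le> dlevel N A k W c"
  unfolding dlevel_level_count[of N A k W]
proof (rule le_Greatest_fixpoint)
  show "mono (level_count N A k W c)"
    using assms(1) finite_subset[OF assms(2,3)] by (intro monoI level_count_mono) auto
  show "level_count N A k W c l \<le> int k" for l
    using assms(1) by (rule level_count_le_k)
  show "int (dlevel N A k W' c) \<le> level_count N A k W c (dlevel N A k W' c)"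
    using dlevel_fixpoint[OF assms(1)] level_count_mono[OF assms] by (metis order_refl)
qed

lemma Wset_Suc: "Wset w (Suc t) = insert (w (Suc t)) (Wset w t)"
  unfolding Wset_def by (auto simp: atLeastAtMostSuc_conv)

lemma finite_Wset: "finite (Wset w t)"
  unfolding Wset_def by simp

lemma dl_Suc_le: "finite N \<Longrightarrow> dl N A k w (Suc t) c \<le> dl N A k w t c"
  unfolding dl_def by (rule dlevel_antimono) (auto simp: Wset_Suc finite_Wset)

lemma Max_insert_0_image_mono:
  fixes g g' :: "'a \<Rightarrow> nat"
  assumes "S \<subseteq> T" and "finite T" and "\<And>x. x \<in> S \<Longrightarrow> g x \<le> g' x"
  shows "Max (insert 0 (g ` S)) \<le> Max (insert 0 (g' ` T))"
proof (rule Max.boundedI)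
  show "finite (insert 0 (g ` S))" using assms(1,2) finite_subset by blast
  fix a
  assume "a \<in> insert 0 (g ` S)"
  then consider "a = 0" | x where "x \<in> S" "a = g x" by blast
  then show "a \<le> Max (insert 0 (g' ` T))"
  proof cases
    case 2
    then have "g' x \<le> Max (insert 0 (g' ` T))" using assms(1,2) by (intro Max_ge) auto
    with 2 assms(3) show ?thesis by (metis le_trans)
  qed simp
qed simp

lemma dlv_Suc_le:
  assumes "finite N" and "finite (A i)"
    and "A i - (Wset w (Suc t) \<union> {c}) \<subseteq> A i - (Wset w t \<union> {c'})"
  shows "dlv N A k w (Suc t) i c \<le> dlv N A k w t i c'"
  unfolding dlv_def using assms by (intro Max_insert_0_image_mono dl_Suc_le) auto

lemma pjr_exact_run_Suc:
  assumes "pjr_exact_run N C A k w f" and "Suc t \<le> k"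
  shows "w (Suc t) \<notin> Wset w t"
    and "\<And>i. i \<in> N - approvers N A (w (Suc t)) \<Longrightarrow> f (Suc t) i = f t i"
proof -
  have "Suc t \<in> {1..k}" using assms(2) by simp
  with assms(1) show "w (Suc t) \<notin> Wset w t"
    and "\<And>i. i \<in> N - approvers N A (w (Suc t)) \<Longrightarrow> f (Suc t) i = f t i"
    unfolding pjr_exact_run_def by (metis diff_Suc_1)+
qed

lemma diff_divide_self_mono:
  fixes a L L' :: real
  assumes "0 \<le> a" and "0 < L" and "L \<le> L'"
  shows "(L - a) / L \<le> (L' - a) / L'"
proof -
  have "a * L \<le> a * L'" using assms by (intro mult_left_mono) auto
  then show ?thesis using assms by (simp add: field_simps)
qed

lemma cond1_Suc:
  assumes "finite N" and "\<And>i. i \<in> N \<Longrightarrow> finite (A i)"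
    and new: "w (Suc t) \<notin> Wset w t"
    and unchanged: "\<And>i. i \<in> N - approvers N A (w (Suc t)) \<Longrightarrow> f (Suc t) i = f t i"
    and normal: "normal_iteration N A k w f (Suc t)"
    and cond1_t: "cond1 N A k w f t c"
    and "c \<notin> Wset w (Suc t)"
  shows "cond1 N A k w f (Suc t) c"
  unfolding cond1_def
proof (intro ballI impI)
  fix i
  assume i: "i \<in> approvers N A c"
  define x where "x = w (Suc t)"
  define L where "L = dlv N A k w (Suc t) i c"
  define a where "a = card (A i \<inter> Wset w (Suc t))"
  assume "card (A i \<inter> Wset w (Suc t)) < L"
  then have "a < L" by (simp add: a_def)
  have "i \<in> N" and finA: "finite (A i)" using i assms(2) by (auto simp: approvers_def)
  have W: "Wset w (Suc t) = insert x (Wset w t)" by (simp add: x_def Wset_Suc)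
  obtain L' where "L \<le> L'" and "(real L' - real a) / real L' \<le> f (Suc t) i"
  proof (cases "x \<in> A i")
    case True
    have "a = card (A i \<inter> Wset w t) + 1"
      using True new finite_Wset[of w t] by (simp add: a_def W x_def Int_insert_right)
    moreover have "L \<le> dlv N A k w t i x"
      unfolding L_def using W by (intro dlv_Suc_le assms(1) finA) auto
    ultimately show ?thesis
      using that normal True \<open>i \<in> N\<close> \<open>a < L\<close>
      by (auto simp: normal_iteration_def approvers_def x_def a_def)
  next
    case False
    have "a = card (A i \<inter> Wset w t)" using False by (simp add: a_def W)
    moreover have "L \<le> dlv N A k w t i c"
      unfolding L_def using W by (intro dlv_Suc_le assms(1) finA) auto
    moreover have "f (Suc t) i = f t i"
      using False \<open>i \<in> N\<close> by (intro unchanged) (simp add: approvers_def x_def)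
    ultimately show ?thesis
      using that cond1_t i \<open>a < L\<close> by (auto simp: cond1_def)
  qed
  moreover have "(real L - real a) / real L \<le> (real L' - real a) / real L'"
    using \<open>L \<le> L'\<close> \<open>a < L\<close> by (intro diff_divide_self_mono) auto
  ultimately show "(real L - real a) / real L \<le> f (Suc t) i" by linarith
qed

lemma cond1_after_normal_iterations:
  assumes "finite N" and "\<And>i. i \<in> N \<Longrightarrow> finite (A i)"
    and run: "pjr_exact_run N C A k w f" and "j \<le> k"
    and "\<forall>t \<in> {1..j}. normal_iteration N A k w f t"
    and "c \<notin> Wset w j"
  shows "cond1 N A k w f j c"
  using assms(4-)
proof (induction j arbitrary: c)
  case 0
  then show ?case using run by (auto simp: cond1_def approvers_def pjr_exact_run_def)
next
  case (Suc t)
  show ?case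
  proof (rule cond1_Suc[OF assms(1,2) pjr_exact_run_Suc[OF run Suc.prems(1)]])
    show "cond1 N A k w f t c"
      using Suc by (simp add: Wset_Suc)
  qed (use Suc.prems in auto)
qed

theorem mainTheorem4:
  fixes N :: "'v set" and C :: "'c set" and A :: "'v \<Rightarrow> 'c set" and k :: nat
    and w :: "nat \<Rightarrow> 'c" and f :: "nat \<Rightarrow> 'v \<Rightarrow> real" and j :: nat
  assumes "finite N" and "N \<noteq> {}" and "finite C"
    and "\<forall>i \<in> N. A i \<subseteq> C"
    and "0 < k" and "k \<le> card C"
    and "pjr_exact_run N C A k w f"
    and "1 \<le> j" and "j \<le> k - 1"
    and "\<forall>t \<in> {1..j}. normal_iteration N A k w f t"
  shows "\<forall>c \<in> C - Wset w j. \<not> starving N A k w f j c"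
proof -
  have "\<And>i. i \<in> N \<Longrightarrow> finite (A i)" using assms(3,4) finite_subset by blast
  moreover have "j \<le> k" using assms(9) by simp
  ultimately show ?thesis
    using cond1_after_normal_iterations[OF assms(1) _ assms(7) _ assms(10)]
    by (auto simp: starving_def)
qed

end
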